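(* Let $p$ be a prime. There is no symmetric triple of the form $\{p, p+2, p+6\}$. Moreover, if $\{p, p+4, p+6\}$ is a symmetric triple, then $p \equiv 1 \pmod{12}$.
   Context: Two distinct primes $p$ and $q$ form a symmetric pair if $\gcd(p-1, q-1) = |p-q|$. A symmetric triple is a set of three primes such that any two of them form a symmetric pair. *)

theory Defs
  imports "HOL-Computational_Algebra.Primes"
begin

definition symmetric_pair :: "nat \<Rightarrow> nat \<Rightarrow> bool" where
  "symmetric_pair p q \<longleftrightarrow> prime p \<and> prime q \<and> p \<noteq> q \<and>
     int (gcd (p - 1) (q - 1)) = \<bar>int p - int q\<bar>"

definition symmetric_triple :: "nat set \<Rightarrow> bool" where
  "symmetric_triple S \<longleftrightarrow> card S = 3 \<and>
     (\<forall>p\<in>S. \<forall>q\<in>S. p \<noteq> q \<longrightarrow> symmetric_pair p q)"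

end

theory Submission
  imports Defs
begin

text \<open>If \<open>{p, p + d}\<close> is a symmetric pair then \<open>d = gcd (p - 1) (p + d - 1)\<close> divides \<open>p - 1\<close>.
  For \<open>{p, p + 2, p + 6}\<close> this gives \<open>p \<equiv> 1 (mod 6)\<close>, so \<open>3\<close> divides the prime \<open>p + 2\<close>,
  which is impossible; for \<open>{p, p + 4, p + 6}\<close> it gives \<open>4\<close> and \<open>6\<close> dividing \<open>p - 1\<close>.\<close>

lemma symmetric_triple_imp_pair:
  assumes "symmetric_triple S" "p \<in> S" "q \<in> S" "p \<noteq> q"
  shows "symmetric_pair p q"
  using assms unfolding symmetric_triple_def by blast

lemma symmetric_pair_imp_prime:
  assumes "symmetric_pair p q"
  shows "prime p" "prime q"
  using assms unfolding symmetric_pair_def by auto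

lemma symmetric_pair_diff_dvd:
  assumes "symmetric_pair p (p + d)"
  shows "d dvd p - 1"
proof -
  have "gcd (p - 1) (p + d - 1) = d"
    using assms unfolding symmetric_pair_def by simp
  then show ?thesis
    by (metis gcd_dvd1)
qed

lemma no_symmetric_triple_0_2_6:
  assumes "prime p"
  shows "\<not> symmetric_triple {p, p + 2, p + 6}"
proof
  assume triple: "symmetric_triple {p, p + 2, p + 6}"
  have "6 dvd p - 1"
    by (intro symmetric_pair_diff_dvd symmetric_triple_imp_pair[OF triple]) auto
  moreover have "p \<ge> 2"
    using assms prime_ge_2_nat by blast
  ultimately have "3 dvd p + 2"
    by presburger
  moreover have "prime (p + 2)"
    by (rule symmetric_pair_imp_prime(2)[of p], rule symmetric_triple_imp_pair[OF triple]) auto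
  ultimately have "3 = p + 2"
    unfolding prime_nat_iff by fastforce
  with \<open>p \<ge> 2\<close> show False
    by simp
qed

lemma symmetric_triple_0_4_6_mod_12:
  assumes "prime p" "symmetric_triple {p, p + 4, p + 6}"
  shows "p mod 12 = 1"
proof -
  have "4 dvd p - 1" "6 dvd p - 1"
    by (intro symmetric_pair_diff_dvd symmetric_triple_imp_pair[OF assms(2)]; simp)+
  moreover have "p \<ge> 2"
    using assms(1) prime_ge_2_nat by blast
  ultimately show ?thesis
    by presburger
qed

theorem lemma1:
  fixes p :: nat
  assumes "prime p"
  shows "\<not> symmetric_triple {p, p + 2, p + 6}
    \<and> (symmetric_triple {p, p + 4, p + 6} \<longrightarrow> p mod 12 = 1)"
  using assms no_symmetric_triple_0_2_6 symmetric_triple_0_4_6_mod_12 by blast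

end
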